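(* Let $n\ge 2$ and $0=x_0<x_1<\dots<x_n<x_{n+1}=1$. Let $\hat F_n(x)=\frac1n\#\{i\in\{1,\dots,n\}: x_i\le x\}$ for $x\in[0,1]$, so $\hat F_n(x)=\frac{i-1}{n}$ for $x\in[x_{i-1},x_i)$, $i=1,\dots,n+1$, and $\hat F_n(1)=1$. Set $p_1=0$, $p_i=\frac1n$ for $i=2,\dots,n+1$, $\delta_1=\frac{n-1}{n^2}$, $\delta_i=-\frac1{n^2}$ for $i=2,\dots,n$, and define for $u\in\mathcal{F}([0,1])$ $$T_pu(x)=p_iu(x)+\sum_{j=1}^{i-1}p_j+\sum_{j=1}^{i-1}\delta_j\quad\text{for }x\in[x_{i-1},x_i),\ i=1,\dots,n+1,$$ with the last interval taken as $[x_n,1]$. Then $T_p$ maps $\mathcal{F}([0,1])$ into itself, $T_p\hat F_n=\hat F_n$, and for every $u\in\mathcal{F}([0,1])$, $d_{sup}(T_p^{s}u,\hat F_n)\to 0$ as $s\to\infty$, where $T_p^s$ denotes the $s$-fold iterate.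
   Context: $\mathcal{F}([0,1])$ denotes the set of distribution functions on $[0,1]$, i.e. functions $F:[0,1]\to[0,1]$ that are non-decreasing, right-continuous, with $F(0)=0$ and $F(1)=1$; $d_{sup}(F,G)=\sup_{x\in[0,1]}|F(x)-G(x)|$. *)

theory Defs
  imports "HOL-Analysis.Analysis"
begin

text \<open>Distribution functions on [0,1]: represented as real functions; only values on [0,1] matter.\<close>
definition distfuns :: "(real \<Rightarrow> real) set" where
  "distfuns = {F. mono_on {0..1} F \<and> (\<forall>x\<in>{0..<1}. continuous (at_right x) F)
                 \<and> (\<forall>x\<in>{0..1}. F x \<in> {0..1}) \<and> F 0 = 0 \<and> F 1 = 1}"

definition dsup :: "(real \<Rightarrow> real) \<Rightarrow> (real \<Rightarrow> real) \<Rightarrow> real" where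
  "dsup F G = (SUP x\<in>{0..1}. \<bar>F x - G x\<bar>)"

definition Fhat :: "nat \<Rightarrow> (nat \<Rightarrow> real) \<Rightarrow> real \<Rightarrow> real" where
  "Fhat n xs x = real (card {i\<in>{1..n}. xs i \<le> x}) / real n"

definition pw :: "nat \<Rightarrow> nat \<Rightarrow> real" where
  "pw n i = (if i = 1 then 0 else 1 / real n)"

definition dl :: "nat \<Rightarrow> nat \<Rightarrow> real" where
  "dl n i = (if i = 1 then (real n - 1) / (real n)^2 else - 1 / (real n)^2)"

definition intv :: "nat \<Rightarrow> (nat \<Rightarrow> real) \<Rightarrow> nat \<Rightarrow> real set" where
  "intv n xs i = (if i = n + 1 then {xs n..1} else {xs (i - 1)..<xs i})"

definition Tp :: "nat \<Rightarrow> (nat \<Rightarrow> real) \<Rightarrow> (real \<Rightarrow> real) \<Rightarrow> real \<Rightarrow> real" where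
  "Tp n xs u x =
     (if x \<in> {0..1} then
        (let i = (THE i. i \<in> {1..n+1} \<and> x \<in> intv n xs i)
         in pw n i * u x + (\<Sum>j=1..<i. pw n j) + (\<Sum>j=1..<i. dl n j))
      else 0)"

end

theory Submission
  imports Defs
begin

text \<open>Let k(x) = knot_count x be the number of knots x_1, ..., x_n that are at most x, so
  that the empirical distribution function is k(x)/n and x lies in the (k(x)+1)-st interval.
  Summing the weights gives T_p u = (1 - 1/n) Fhat + u/n wherever k(x) >= 1, while
  T_p u = 0 = Fhat on [0, x_1). Hence T_p u is, away from [0, x_1), a convex combination of two
  distribution functions, and T_p u - Fhat = (u - Fhat)/n pointwise: T_p fixes Fhat and
  contracts the sup distance to it by the factor 1/n.\<close>

lemma dsup_le:
  assumes "\<And>x. x \<in> {0..1} \<Longrightarrow> \<bar>F x - G x\<bar> \<le> c"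
  shows "dsup F G \<le> c"
  unfolding dsup_def using assms by (intro cSUP_least) auto

lemma dsup_nonneg:
  assumes "\<And>x. x \<in> {0..1} \<Longrightarrow> \<bar>F x - G x\<bar> \<le> c"
  shows "0 \<le> dsup F G"
proof -
  have "bdd_above ((\<lambda>x. \<bar>F x - G x\<bar>) ` {0..1})"
    using assms by (intro bdd_aboveI2)
  then show ?thesis
    unfolding dsup_def by (rule cSUP_upper2[of _ _ 0]) auto
qed

lemma dsup_iterates_tendsto_zero:
  assumes contr: "\<And>v x. x \<in> {0..1} \<Longrightarrow> \<bar>T v x - F x\<bar> \<le> q * \<bar>v x - F x\<bar>"
    and q: "0 \<le> q" "q < 1"
    and bound: "\<And>x. x \<in> {0..1} \<Longrightarrow> \<bar>u x - F x\<bar> \<le> C"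
  shows "(\<lambda>s. dsup ((T ^^ s) u) F) \<longlonglongrightarrow> 0"
proof -
  have pointwise: "\<bar>(T ^^ s) u x - F x\<bar> \<le> q ^ s * C" if "x \<in> {0..1}" for s x
  proof (induction s)
    case 0
    show ?case using bound[OF that] by simp
  next
    case (Suc s)
    have "\<bar>(T ^^ Suc s) u x - F x\<bar> \<le> q * \<bar>(T ^^ s) u x - F x\<bar>"
      using contr[OF that] by simp
    also have "\<dots> \<le> q * (q ^ s * C)"
      using Suc q(1) by (rule mult_left_mono)
    finally show ?case by simp
  qed
  show ?thesis
  proof (rule Lim_null_comparison)
    show "\<forall>\<^sub>F s in sequentially. norm (dsup ((T ^^ s) u) F) \<le> q ^ s * C"
      using dsup_le[OF pointwise] dsup_nonneg[OF pointwise] by simp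
    show "(\<lambda>s. q ^ s * C) \<longlonglongrightarrow> 0"
      using q by (intro tendsto_mult_left_zero) (simp add: LIMSEQ_power_zero)
  qed
qed

lemma sum_pw_initial: "m \<noteq> 0 \<Longrightarrow> (\<Sum>j=1..<Suc m. pw n j) = (real m - 1) / n"
  by (induction m) (auto simp: pw_def diff_divide_distrib)

lemma sum_dl_initial:
  "m \<noteq> 0 \<Longrightarrow> (\<Sum>j=1..<Suc m. dl n j) = (real n - 1) / (real n)^2 - (real m - 1) / (real n)^2"
  by (induction m) (auto simp: dl_def diff_divide_distrib)

locale knot_partition =
  fixes n :: nat and xs :: "nat \<Rightarrow> real"
  assumes n_pos: "n > 0"
    and first_knot: "xs 0 = 0" and last_knot: "xs (n + 1) = 1"
    and knots_increasing: "strict_mono_on {0..n+1} xs"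
begin

definition knot_count :: "real \<Rightarrow> nat" where
  "knot_count x = card {i\<in>{1..n}. xs i \<le> x}"

lemma Fhat_eq: "Fhat n xs x = knot_count x / n"
  by (simp add: Fhat_def knot_count_def)

lemma knots_less: "a < b \<Longrightarrow> b \<le> n + 1 \<Longrightarrow> xs a < xs b"
  using knots_increasing by (auto simp: monotone_on_def)

lemma knots_le: "a \<le> b \<Longrightarrow> b \<le> n + 1 \<Longrightarrow> xs a \<le> xs b"
  using knots_less[of a b] by (cases "a = b") auto

lemma knot_count_eqI:
  assumes "m \<le> n" "xs m \<le> x" "m < n \<Longrightarrow> x < xs (Suc m)"
  shows "knot_count x = m"
proof -
  have "{i\<in>{1..n}. xs i \<le> x} = {1..m}"
  proof (intro set_eqI iffI)
    fix i assume i: "i \<in> {i\<in>{1..n}. xs i \<le> x}"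
    have "\<not> m < i"
    proof
      assume "m < i"
      then have "x < xs (Suc m)" "xs (Suc m) \<le> xs i" using assms i knots_le[of "Suc m" i] by auto
      with i show False by simp
    qed
    with i show "i \<in> {1..m}" by simp
  next
    fix i assume "i \<in> {1..m}"
    then show "i \<in> {i\<in>{1..n}. xs i \<le> x}" using assms knots_le[of i m] by auto
  qed
  then show ?thesis by (simp add: knot_count_def)
qed

lemma knot_count_bounds:
  assumes "0 \<le> x"
  shows "knot_count x \<le> n" "xs (knot_count x) \<le> x"
    and "knot_count x < n \<Longrightarrow> x < xs (Suc (knot_count x))"
proof -
  define P where "P m \<longleftrightarrow> m \<le> n \<and> xs m \<le> x" for m
  define m where "m = Greatest P"
  have bounded: "P k \<Longrightarrow> k \<le> n" for k by (simp add: P_def)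
  have "P 0" using assms first_knot by (simp add: P_def)
  then have m: "m \<le> n \<and> xs m \<le> x"
    using GreatestI_nat[of P 0 n] bounded by (simp add: m_def P_def)
  have above: "x < xs (Suc m)" if "m < n"
  proof (rule ccontr)
    assume "\<not> x < xs (Suc m)"
    then have "P (Suc m)" using that by (simp add: P_def)
    then have "Suc m \<le> m" unfolding m_def using bounded by (rule Greatest_le_nat)
    then show False by simp
  qed
  have "knot_count x = m" using m above by (intro knot_count_eqI) auto
  then show "knot_count x \<le> n" "xs (knot_count x) \<le> x"
    and "knot_count x < n \<Longrightarrow> x < xs (Suc (knot_count x))"
    using m above by auto
qed

lemma knot_count_mono: "x \<le> y \<Longrightarrow> knot_count x \<le> knot_count y"
  unfolding knot_count_def by (rule card_mono) auto

lemma knot_count_0: "knot_count 0 = 0"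
  using first_knot knots_less[of 0 1] n_pos by (intro knot_count_eqI) auto

lemma knot_count_1: "knot_count 1 = n"
  using last_knot knots_le[of n "n + 1"] by (intro knot_count_eqI) auto

lemma knot_count_eventually_const:
  assumes "0 \<le> x"
  shows "\<forall>\<^sub>F y in at_right x. knot_count y = knot_count x"
proof -
  define b where "b = (if knot_count x < n then xs (Suc (knot_count x)) else x + 1)"
  have "x < b" using knot_count_bounds[OF assms] by (simp add: b_def)
  moreover have "knot_count y = knot_count x" if "x < y" "y < b" for y
    using knot_count_bounds[OF assms] that by (intro knot_count_eqI) (auto simp: b_def split: if_splits)
  ultimately show ?thesis unfolding eventually_at_right_field by blast
qed

lemma Fhat_bounds: "0 \<le> Fhat n xs x" "x \<ge> 0 \<Longrightarrow> Fhat n xs x \<le> 1"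
  using knot_count_bounds(1)[of x] n_pos by (auto simp: Fhat_eq)

lemma interval_index:
  assumes "x \<in> {0..1}"
  shows "(THE i. i \<in> {1..n+1} \<and> x \<in> intv n xs i) = Suc (knot_count x)"
proof -
  have "i \<in> {1..n+1} \<and> x \<in> intv n xs i \<longleftrightarrow> i = Suc (knot_count x)" for i
  proof
    assume i: "i \<in> {1..n+1} \<and> x \<in> intv n xs i"
    then have "knot_count x = i - 1"
      by (intro knot_count_eqI) (auto simp: intv_def split: if_splits)
    with i show "i = Suc (knot_count x)" by simp
  next
    assume "i = Suc (knot_count x)"
    then show "i \<in> {1..n+1} \<and> x \<in> intv n xs i"
      using assms knot_count_bounds[of x] by (auto simp: intv_def)
  qed
  then show ?thesis by simp
qed

lemma Tp_eq:
  assumes "x \<in> {0..1}"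
  shows "Tp n xs u x = (if knot_count x = 0 then 0 else (1 - 1 / n) * Fhat n xs x + u x / n)"
proof -
  let ?k = "knot_count x"
  have "Tp n xs u x = pw n (Suc ?k) * u x + (\<Sum>j=1..<Suc ?k. pw n j) + (\<Sum>j=1..<Suc ?k. dl n j)"
    using assms unfolding Tp_def interval_index[OF assms] by simp
  also have "\<dots> = (if ?k = 0 then 0 else (1 - 1 / n) * Fhat n xs x + u x / n)"
  proof (cases "?k = 0")
    case False
    then show ?thesis
      unfolding sum_pw_initial[OF False] sum_dl_initial[OF False]
      using n_pos by (simp add: pw_def Fhat_eq field_simps power2_eq_square)
  qed (simp add: pw_def)
  finally show ?thesis .
qed

lemma Tp_nonneg:
  assumes "x \<in> {0..1}" "0 \<le> u x"
  shows "0 \<le> Tp n xs u x"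
  using assms n_pos Fhat_bounds(1)[of x] by (simp add: Tp_eq)

lemma Tp_le_1:
  assumes "x \<in> {0..1}" "u x \<le> 1"
  shows "Tp n xs u x \<le> 1"
proof -
  have "(1 - 1 / n) * Fhat n xs x + u x / n \<le> (1 - 1 / n) * 1 + 1 / n"
    using assms n_pos Fhat_bounds(2)[of x]
    by (intro add_mono mult_left_mono divide_right_mono) auto
  then show ?thesis using assms by (simp add: Tp_eq)
qed

lemma Tp_mono_on:
  assumes "mono_on {0..1} u" "\<And>x. x \<in> {0..1} \<Longrightarrow> 0 \<le> u x"
  shows "mono_on {0..1} (Tp n xs u)"
proof (rule mono_onI)
  fix x y :: real assume xy: "x \<in> {0..1}" "y \<in> {0..1}" "x \<le> y"
  show "Tp n xs u x \<le> Tp n xs u y"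
  proof (cases "knot_count x = 0")
    case True
    then show ?thesis using xy assms(2) Tp_nonneg by (simp add: Tp_eq)
  next
    case False
    have "knot_count x \<le> knot_count y" using xy(3) by (rule knot_count_mono)
    then have "(1 - 1 / n) * Fhat n xs x + u x / n \<le> (1 - 1 / n) * Fhat n xs y + u y / n"
      using xy n_pos mono_onD[OF assms(1)]
      by (intro add_mono mult_left_mono divide_right_mono) (auto simp: Fhat_eq divide_right_mono)
    then show ?thesis using False xy \<open>knot_count x \<le> knot_count y\<close> by (simp add: Tp_eq)
  qed
qed

lemma Tp_continuous_at_right:
  assumes "x \<in> {0..<1}" "continuous (at_right x) u"
  shows "continuous (at_right x) (Tp n xs u)"
proof -
  let ?c = "knot_count x"
  define h where "h y = (if ?c = 0 then 0 else (1 - 1 / n) * (?c / n) + u y / n)" for y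
  have "\<forall>\<^sub>F y in at_right x. y \<in> {0..1}"
    unfolding eventually_at_right_field using assms(1) by (intro exI[of _ 1]) auto
  moreover have "\<forall>\<^sub>F y in at_right x. knot_count y = ?c"
    using assms(1) by (intro knot_count_eventually_const) simp
  ultimately have "\<forall>\<^sub>F y in at_right x. h y = Tp n xs u y"
    by eventually_elim (auto simp: h_def Tp_eq Fhat_eq)
  moreover have "(h \<longlongrightarrow> h x) (at_right x)"
    using assms(2) n_pos unfolding h_def continuous_within by (auto intro!: tendsto_intros)
  moreover have "h x = Tp n xs u x"
    using assms(1) by (simp add: h_def Tp_eq Fhat_eq)
  ultimately show ?thesis
    unfolding continuous_within by (metis Lim_transform_eventually)
qed

lemma Tp_distfuns:
  assumes "u \<in> distfuns"
  shows "Tp n xs u \<in> distfuns"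
proof -
  have u: "mono_on {0..1} u" "\<And>x. x \<in> {0..<1} \<Longrightarrow> continuous (at_right x) u"
    "\<And>x. x \<in> {0..1} \<Longrightarrow> u x \<in> {0..1}" "u 1 = 1"
    using assms by (auto simp: distfuns_def)
  have "Tp n xs u 0 = 0" by (simp add: Tp_eq knot_count_0)
  moreover have "Tp n xs u 1 = 1"
    using n_pos u(4) by (simp add: Tp_eq knot_count_1 Fhat_eq field_simps)
  ultimately show ?thesis
    using u Tp_mono_on Tp_continuous_at_right Tp_nonneg Tp_le_1
    unfolding distfuns_def by auto
qed

lemma Tp_contraction:
  assumes "x \<in> {0..1}"
  shows "\<bar>Tp n xs v x - Fhat n xs x\<bar> \<le> 1 / n * \<bar>v x - Fhat n xs x\<bar>"
proof (cases "knot_count x = 0")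
  case False
  then have "Tp n xs v x - Fhat n xs x = (v x - Fhat n xs x) / n"
    using assms n_pos by (simp add: Tp_eq field_simps)
  then show ?thesis by (simp add: abs_divide)
qed (use assms in \<open>simp add: Tp_eq Fhat_eq\<close>)

lemma Tp_Fhat: "x \<in> {0..1} \<Longrightarrow> Tp n xs (Fhat n xs) x = Fhat n xs x"
  using Tp_contraction[of x "Fhat n xs"] by simp

end

theorem mainTheorem8:
  fixes n :: nat and xs :: "nat \<Rightarrow> real"
  assumes "n \<ge> 2"
    and "xs 0 = 0" and "xs (n + 1) = 1"
    and "strict_mono_on {0..n+1} xs"
  shows "(\<forall>u\<in>distfuns. Tp n xs u \<in> distfuns)
       \<and> (\<forall>x\<in>{0..1}. Tp n xs (Fhat n xs) x = Fhat n xs x)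
       \<and> (\<forall>u\<in>distfuns. (\<lambda>s. dsup ((Tp n xs ^^ s) u) (Fhat n xs)) \<longlonglongrightarrow> 0)"
proof -
  interpret knot_partition n xs using assms by unfold_locales auto
  have "(\<lambda>s. dsup ((Tp n xs ^^ s) u) (Fhat n xs)) \<longlonglongrightarrow> 0" if "u \<in> distfuns" for u
  proof (rule dsup_iterates_tendsto_zero[where q = "1 / n" and C = 1])
    show "\<bar>u x - Fhat n xs x\<bar> \<le> 1" if "x \<in> {0..1}" for x
    proof -
      have "u x \<in> {0..1}" using \<open>u \<in> distfuns\<close> that by (simp add: distfuns_def)
      then show ?thesis using that Fhat_bounds[of x] by (auto simp: abs_le_iff)
    qed
  qed (use assms(1) Tp_contraction in auto)
  then show ?thesis using Tp_distfuns Tp_Fhat by blast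
qed

end
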